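(* Every exceptional domestic duality of a building $\mathsf{A}_n(2)$ (the projective space $\mathsf{PG}(n,2)$, $n\geq 2$) is strongly exceptional domestic.
   Context: Types of $\mathsf{PG}(n,2)$ are $1,\ldots,n$ (type $i$: $(i-1)$-dimensional subspaces), $S=\{1,\ldots,n\}$. A duality is an automorphism with type map $i\mapsto n+1-i$; composing with opposition $i\mapsto n+1-i$ gives the identity on $S$. Simplices are opposite if every chamber containing either is opposite some chamber containing the other. For $J\subseteq S$, $\theta$ is $J$-domestic if no simplex of type $J$ is mapped to an opposite; domestic if no chamber is mapped to an opposite; exceptional domestic if domestic and every $i\in S$ lies in the type of some simplex mapped to an opposite; strongly exceptional domestic if domestic but not $J$-domestic for any proper subset $J\subsetneq S$ (for dualities of $\mathsf{A}_n$ this means: for each cotype $i$ there is a panel of cotype $i$ mapped to an opposite panel). *)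

theory Defs
  imports "HOL-Analysis.Cartesian_Space" "HOL-Library.Z2"
begin

text \<open>The projective space PG(n,2) is modelled by the vector space V = GF(2)^(n+1),
  realised as bit ^ 'n with CARD('n) = n + 1.  The vertices (elements) of the building
  A_n(2) are the proper nonzero subspaces; a subspace of vector-space dimension i
  (projective dimension i - 1) has type i, so types range over S = {1..n}.\<close>

definition rk :: "'n::finite itself \<Rightarrow> nat" where
  "rk _ = CARD('n) - 1"

definition typeset :: "'n::finite itself \<Rightarrow> nat set" where
  "typeset T = {1..rk T}"

definition is_elem :: "(bit ^ 'n::finite) set \<Rightarrow> bool" where
  "is_elem U \<longleftrightarrow> vec.subspace U \<and> 1 \<le> vec.dim U \<and> vec.dim U \<le> rk TYPE('n)"

definition elem_type :: "(bit ^ 'n::finite) set \<Rightarrow> nat" where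
  "elem_type U = vec.dim U"

definition is_simplex :: "(bit ^ 'n::finite) set set \<Rightarrow> bool" where
  "is_simplex F \<longleftrightarrow> (\<forall>U\<in>F. is_elem U) \<and> (\<forall>U\<in>F. \<forall>W\<in>F. U \<subseteq> W \<or> W \<subseteq> U)"

definition simplex_type :: "(bit ^ 'n::finite) set set \<Rightarrow> nat set" where
  "simplex_type F = elem_type ` F"

definition is_chamber :: "(bit ^ 'n::finite) set set \<Rightarrow> bool" where
  "is_chamber C \<longleftrightarrow> is_simplex C \<and> simplex_type C = typeset TYPE('n)"

definition opp_chambers :: "(bit ^ 'n::finite) set set \<Rightarrow> (bit ^ 'n) set set \<Rightarrow> bool" where
  "opp_chambers C D \<longleftrightarrow> is_chamber C \<and> is_chamber D \<and>
     (\<forall>U\<in>C. \<forall>W\<in>D. elem_type U + elem_type W = rk TYPE('n) + 1 \<longrightarrow> U \<inter> W = {0})"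

definition opp_simplices :: "(bit ^ 'n::finite) set set \<Rightarrow> (bit ^ 'n) set set \<Rightarrow> bool" where
  "opp_simplices A B \<longleftrightarrow> is_simplex A \<and> is_simplex B \<and>
     (\<forall>C. is_chamber C \<and> A \<subseteq> C \<longrightarrow> (\<exists>D. is_chamber D \<and> B \<subseteq> D \<and> opp_chambers C D)) \<and>
     (\<forall>D. is_chamber D \<and> B \<subseteq> D \<longrightarrow> (\<exists>C. is_chamber C \<and> A \<subseteq> C \<and> opp_chambers C D))"

definition is_duality :: "((bit ^ 'n::finite) set \<Rightarrow> (bit ^ 'n) set) \<Rightarrow> bool" where
  "is_duality \<theta> \<longleftrightarrow> bij_betw \<theta> {U. is_elem U} {U. is_elem U} \<and>
     (\<forall>U W. is_elem U \<and> is_elem W \<longrightarrow>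
        ((U \<subseteq> W \<or> W \<subseteq> U) \<longleftrightarrow> (\<theta> U \<subseteq> \<theta> W \<or> \<theta> W \<subseteq> \<theta> U))) \<and>
     (\<forall>U. is_elem U \<longrightarrow> elem_type (\<theta> U) = rk TYPE('n) + 1 - elem_type U)"

definition J_domestic :: "nat set \<Rightarrow> ((bit ^ 'n::finite) set \<Rightarrow> (bit ^ 'n) set) \<Rightarrow> bool" where
  "J_domestic J \<theta> \<longleftrightarrow>
     \<not> (\<exists>A. is_simplex A \<and> simplex_type A = J \<and> opp_simplices A (\<theta> ` A))"

definition domestic :: "((bit ^ 'n::finite) set \<Rightarrow> (bit ^ 'n) set) \<Rightarrow> bool" where
  "domestic \<theta> \<longleftrightarrow> J_domestic (typeset TYPE('n)) \<theta>"

definition exceptional_domestic :: "((bit ^ 'n::finite) set \<Rightarrow> (bit ^ 'n) set) \<Rightarrow> bool" where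
  "exceptional_domestic \<theta> \<longleftrightarrow> domestic \<theta> \<and>
     (\<forall>i\<in>typeset TYPE('n). \<exists>A. is_simplex A \<and> i \<in> simplex_type A \<and> opp_simplices A (\<theta> ` A))"

definition strongly_exceptional_domestic :: "((bit ^ 'n::finite) set \<Rightarrow> (bit ^ 'n) set) \<Rightarrow> bool" where
  "strongly_exceptional_domestic \<theta> \<longleftrightarrow> domestic \<theta> \<and>
     (\<forall>J. J \<subset> typeset TYPE('n) \<longrightarrow> \<not> J_domestic J \<theta>)"

end

theory Submission
  imports Defs
begin

(* A duality theta of PG(n,2) is the polarity of a nondegenerate bilinear form beta on
   V = GF(2)^(n+1), and a simplex is mapped to an opposite one exactly when each of its
   elements U meets theta U = U^perp trivially, i.e. when beta is nondegenerate on U.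
   An exceptional domestic duality maps some point <a> to an opposite one, so beta(a, a) = 1.
   Starting from one anisotropic vector, for every type i there is a flag of nondegenerate
   subspaces of all dimensions except i: split off anisotropic points one at a time, and pass
   to orthogonal complements to omit dimension 1. For a proper subset J of the types, choose
   i outside J: the subflag of type J is mapped to an opposite simplex, so theta is not
   J-domestic. *)

section \<open>Linear algebra over GF(2)\<close>

lemma bit_vec_add_self [simp]: "(x::bit^'n) + x = 0"
  by (simp add: vec_eq_iff)

lemma bit_vec_diff [simp]: "(x::bit^'n) - y = x + y"
  by (simp add: vec_eq_iff)

lemma bit_vec_add_cancel [simp]:
  "a + (x + a) = (x::bit^'n)" "a + (a + x) = x" "(x + a) + a = x"
  by (metis add.assoc add.commute add_0_right bit_vec_add_self)+

lemma subspace_bit_iff: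
  "vec.subspace (S::(bit^'n) set) \<longleftrightarrow> 0 \<in> S \<and> (\<forall>x\<in>S. \<forall>y\<in>S. x + y \<in> S)"
proof
  assume S: "0 \<in> S \<and> (\<forall>x\<in>S. \<forall>y\<in>S. x + y \<in> S)"
  have "c *s x \<in> S" if "x \<in> S" for c :: bit and x
    using S that bit_not_zero_iff[of c] by (cases "c = 0") simp_all
  with S show "vec.subspace S" unfolding vec.subspace_def by blast
qed (simp add: vec.subspace_0 vec.subspace_add)

lemma span_singleton_subset_iff:
  fixes S :: "('a::field^'n) set"
  shows "vec.subspace S \<Longrightarrow> vec.span {x} \<subseteq> S \<longleftrightarrow> x \<in> S"
  by (meson empty_subsetI insert_subset vec.span_base vec.span_minimal singletonI subsetD)

lemma span_insert_subspace:
  assumes "vec.subspace (S::(bit^'n) set)"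
  shows "vec.span (insert a S) = S \<union> (+) a ` S"
proof -
  have sp: "vec.span S = S" using assms by simp
  have sub: "(\<exists>k. x - k *s a \<in> S) \<longleftrightarrow> x \<in> S \<or> a + x \<in> S" for x
  proof
    assume "\<exists>k. x - k *s a \<in> S"
    then obtain k where "x - k *s a \<in> S" by blast
    then show "x \<in> S \<or> a + x \<in> S"
      using bit_not_zero_iff[of k] by (cases "k = 0") (simp_all add: add.commute)
  next
    assume "x \<in> S \<or> a + x \<in> S"
    then show "\<exists>k. x - k *s a \<in> S"
      by (metis add.commute add_0_right bit_vec_diff vector_smult_lid vector_smult_lzero)
  qed
  have img: "x \<in> (+) a ` S \<longleftrightarrow> a + x \<in> S" for x
    by (metis bit_vec_add_cancel(2) image_iff)
  show ?thesis
    unfolding vec.span_insert sp sub using img by auto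
qed

lemma span_singleton_bit: "vec.span {a::bit^'n} = {0, a}"
  unfolding vec.span_singleton
proof (intro equalityI subsetI)
  fix x assume "x \<in> range (\<lambda>k. k *s a)"
  then obtain k where "x = k *s a" by blast
  then show "x \<in> {0, a}"
    using bit_not_zero_iff[of k] by (cases "k = 0") auto
next
  fix x assume "x \<in> {0, a}"
  then show "x \<in> range (\<lambda>k. k *s a)"
    by (metis insertE rangeI singletonD vector_smult_lid vector_smult_lzero)
qed

lemma dim_span_insert_subspace:
  fixes S :: "('a::field^'n) set"
  assumes "vec.subspace S" "a \<notin> S"
  shows "vec.dim (vec.span (insert a S)) = vec.dim S + 1"
proof -
  have "a \<notin> vec.span S" using assms vec.span_eq_iff by blast
  then show ?thesis by (simp add: vec.dim_insert)
qed

lemma dim_Un_Int: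
  fixes S :: "('a::field^'n) set"
  assumes "vec.subspace S" "vec.subspace T"
  shows "vec.dim (S \<union> T) + vec.dim (S \<inter> T) = vec.dim S + vec.dim T"
proof -
  have "vec.span S = S" "vec.span T = T" using assms by simp_all
  then show ?thesis
    using vec.dim_sums_Int[OF assms] vec.dim_span[of "S \<union> T"] by (simp only: vec.span_Un)
qed

lemma subspace_eq_UNIV_iff_dim:
  fixes S :: "('a::field^'n) set"
  assumes "vec.subspace S"
  shows "S = UNIV \<longleftrightarrow> vec.dim S = CARD('n)"
  by (metis assms vec.dim_eq_full vec.span_UNIV vec_dim_card vec.span_eq_iff)

lemma hyperplane_add_iff:
  fixes H :: "(bit^'n) set"
  assumes H: "vec.subspace H" "vec.dim H + 1 = CARD('n)"
  shows "y + z \<in> H \<longleftrightarrow> (y \<in> H \<longleftrightarrow> z \<in> H)"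
proof (cases "y \<in> H \<or> z \<in> H")
  case True
  then show ?thesis
    using vec.subspace_add[OF H(1)] by (metis bit_vec_add_cancel(2,3))
next
  case False
  then have "vec.dim (vec.span (insert y H)) = CARD('n)"
    using dim_span_insert_subspace[OF H(1)] H(2) by simp
  then have "vec.span (insert y H) = UNIV"
    by (simp add: subspace_eq_UNIV_iff_dim)
  then have "z \<in> (+) y ` H"
    using False span_insert_subspace[OF H(1), of y] by blast
  with False show ?thesis by auto
qed

section \<open>Chambers in general position\<close>

lemma typeset_eq: "typeset TYPE('n::finite) = {1..<CARD('n)}"
  by (auto simp: typeset_def rk_def)

lemma is_elem_iff:
  "is_elem (U::(bit^'n::finite) set) \<longleftrightarrow> vec.subspace U \<and> 1 \<le> vec.dim U \<and> vec.dim U < CARD('n)"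
  by (auto simp: is_elem_def rk_def)

lemma chamber_elem: "is_chamber C \<Longrightarrow> U \<in> C \<Longrightarrow> is_elem U"
  unfolding is_chamber_def is_simplex_def by blast

lemma simplex_elem_eqI:
  assumes "is_simplex A" "U \<in> A" "W \<in> A" "vec.dim U = vec.dim W"
  shows "U = W"
proof -
  have "vec.subspace U" "vec.subspace W"
    using assms by (auto simp: is_simplex_def is_elem_iff)
  moreover have "U \<subseteq> W \<or> W \<subseteq> U"
    using assms(1-3) by (auto simp: is_simplex_def)
  ultimately show ?thesis
    using vec.subspace_dim_equal assms(4) by (metis order_refl)
qed

lemma chamber_has_elem_of_dim:
  fixes C :: "(bit^'n::finite) set set"
  assumes "is_chamber C" "1 \<le> k" "k < CARD('n)"
  shows "\<exists>U\<in>C. vec.dim U = k"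
proof -
  have "k \<in> vec.dim ` C"
    using assms by (simp add: is_chamber_def typeset_eq simplex_type_def elem_type_def)
  then show ?thesis by blast
qed

lemma is_chamber_flag:
  fixes d :: "nat \<Rightarrow> (bit^'n::finite) set"
  assumes d: "\<And>k. 1 \<le> k \<Longrightarrow> k < CARD('n) \<Longrightarrow> vec.subspace (d k) \<and> vec.dim (d k) = k"
    and d_mono: "\<And>j k. j \<le> k \<Longrightarrow> k < CARD('n) \<Longrightarrow> d j \<subseteq> d k"
  shows "is_chamber (d ` {1..<CARD('n)})"
proof -
  have "d j \<subseteq> d k \<or> d k \<subseteq> d j" if "j < CARD('n)" "k < CARD('n)" for j k
    using d_mono that by (cases "j \<le> k") simp_all
  then have "is_simplex (d ` {1..<CARD('n)})"
    unfolding is_simplex_def is_elem_iff using d by auto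
  moreover have "simplex_type (d ` {1..<CARD('n)}) = {1..<CARD('n)}"
    unfolding simplex_type_def elem_type_def image_image using d by force
  ultimately show ?thesis
    by (simp add: is_chamber_def typeset_eq)
qed

lemma opp_chambers_sym: "opp_chambers C D \<Longrightarrow> opp_chambers D C"
  unfolding opp_chambers_def by (metis add.commute inf_commute)

lemma span_insert_Int_eq_0:
  fixes E C :: "(bit^'n::finite) set"
  assumes E: "vec.subspace E" and C: "vec.subspace C" and "E \<inter> C = {0}"
    and v: "v \<notin> vec.span (E \<union> C)"
  shows "vec.span (insert v E) \<inter> C = {0}"
proof -
  have "z = 0" if z: "z \<in> C" "z \<in> E \<or> z \<in> (+) v ` E" for z
    using z(2)
  proof
    assume "z \<in> E"
    then show "z = 0" using z(1) \<open>E \<inter> C = {0}\<close> by blast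
  next
    assume "z \<in> (+) v ` E"
    then obtain h where "h \<in> E" "z = v + h" by blast
    moreover have "z + h \<in> vec.span (E \<union> C)"
      using \<open>h \<in> E\<close> z(1) by (intro vec.subspace_add) (auto intro: vec.span_base)
    ultimately show "z = 0" using v by simp
  qed
  then show ?thesis
    using vec.subspace_0[OF C] vec.subspace_0[OF E] by (auto simp: span_insert_subspace[OF E])
qed

lemma exists_subspace_avoiding:
  fixes E C C0 Y :: "(bit^'n::finite) set"
  assumes E: "vec.subspace E" and C: "vec.subspace C" and C0: "vec.subspace C0"
    and Y: "vec.subspace Y"
    and "E \<inter> C = {0}" "E \<subseteq> Y" "C0 \<subseteq> C" "Y \<inter> C0 = {0}"
    and dims: "vec.dim C + vec.dim E < vec.dim C0 + vec.dim Y"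
  obtains D where "vec.subspace D" "vec.dim D = vec.dim E + 1" "E \<subseteq> D" "D \<subseteq> Y"
    "D \<inter> C = {0}"
proof -
  define H where "H = vec.span (E \<union> C)"
  have E_H: "E \<subseteq> H" and C_H: "C \<subseteq> H"
    using vec.span_superset[of "E \<union> C"] by (auto simp: H_def)
  have dim_H: "vec.dim H = vec.dim E + vec.dim C"
    using dim_Un_Int[OF E C] \<open>E \<inter> C = {0}\<close> by (simp add: H_def)
  have "\<not> Y \<subseteq> H"
  proof
    assume "Y \<subseteq> H"
    with \<open>C0 \<subseteq> C\<close> C_H have "vec.span (Y \<union> C0) \<subseteq> H"
      unfolding H_def by (intro vec.span_minimal) auto
    then have "vec.dim (vec.span (Y \<union> C0)) \<le> vec.dim H"
      by (rule vec.dim_subset)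
    moreover have "vec.dim (vec.span (Y \<union> C0)) = vec.dim Y + vec.dim C0"
      using dim_Un_Int[OF Y C0] \<open>Y \<inter> C0 = {0}\<close> by simp
    ultimately show False
      using dim_H dims by linarith
  qed
  then obtain v where v: "v \<in> Y" "v \<notin> H" by blast
  show thesis
  proof (rule that[of "vec.span (insert v E)"])
    show "vec.dim (vec.span (insert v E)) = vec.dim E + 1"
      using dim_span_insert_subspace[OF E] v E_H by blast
    show "vec.span (insert v E) \<subseteq> Y"
      using v(1) \<open>E \<subseteq> Y\<close> Y by (simp add: vec.span_minimal)
    show "vec.span (insert v E) \<inter> C = {0}"
      using span_insert_Int_eq_0[OF E C \<open>E \<inter> C = {0}\<close>] v(2) by (simp add: H_def)
  qed (use vec.span_superset[of "insert v E"] in auto)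
qed

text \<open>The chain \<open>c\<close> is either \<open>chamber_chain C\<close> for a chamber \<open>C\<close> to be opposed, or the zero
  chain, in which case \<open>exists_transversal_chamber\<close> just extends \<open>B\<close> to a chamber.\<close>

context
  fixes c :: "nat \<Rightarrow> (bit^'n::finite) set" and B :: "(bit^'n) set set"
  assumes c_0: "c 0 = {0}"
    and c_subspace: "\<And>k. k < CARD('n) \<Longrightarrow> vec.subspace (c k)"
    and c_mono: "\<And>j k. j \<le> k \<Longrightarrow> k < CARD('n) \<Longrightarrow> c j \<subseteq> c k"
    and c_dim_step: "\<And>j k. j \<le> k \<Longrightarrow> k < CARD('n) \<Longrightarrow> vec.dim (c k) \<le> vec.dim (c j) + (k - j)"
    and B_simplex: "is_simplex B"
    and B_transversal: "\<And>W. W \<in> B \<Longrightarrow> W \<inter> c (CARD('n) - vec.dim W) = {0}"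
begin

lemma exists_least_transversal_above:
  assumes "Suc K \<le> CARD('n)"
  obtains Y where "Y = UNIV \<or> Y \<in> B" "vec.subspace Y" "Suc K \<le> vec.dim Y"
    "Y \<inter> c (CARD('n) - vec.dim Y) = {0}"
    "\<forall>W\<in>B. Suc K \<le> vec.dim W \<longrightarrow> Y \<subseteq> W \<and> vec.dim Y \<le> vec.dim W"
proof -
  have B_subspace: "vec.subspace W" if "W \<in> B" for W
    using B_simplex that by (auto simp: is_simplex_def is_elem_iff)
  define Ys where "Ys = {Y \<in> insert UNIV B. Suc K \<le> vec.dim Y}"
  have "UNIV \<in> Ys"
    using assms by (simp add: Ys_def vec_dim_card del: vec.dim_UNIV)
  then obtain Y where "Y \<in> Ys" and Y_min: "\<And>Z. Z \<in> Ys \<Longrightarrow> vec.dim Y \<le> vec.dim Z"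
    using ex_has_least_nat[of "\<lambda>Y. Y \<in> Ys" UNIV vec.dim] by blast
  then have Y_cases: "Y = UNIV \<or> Y \<in> B" and Y_dim: "Suc K \<le> vec.dim Y"
    by (auto simp: Ys_def)
  then have Y_subspace: "vec.subspace Y"
    using B_subspace by auto
  have Y_c: "Y \<inter> c (CARD('n) - vec.dim Y) = {0}"
    using Y_cases
  proof
    assume "Y = UNIV"
    then show ?thesis by (simp add: vec_dim_card c_0 del: vec.dim_UNIV)
  qed (rule B_transversal)
  have Y_below: "Y \<subseteq> W \<and> vec.dim Y \<le> vec.dim W" if W: "W \<in> B" "Suc K \<le> vec.dim W" for W
  proof -
    have "W \<subseteq> Y \<or> Y \<subseteq> W"
      using Y_cases W(1) B_simplex by (auto simp: is_simplex_def)
    moreover have "vec.dim Y \<le> vec.dim W"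
      using W by (intro Y_min) (simp add: Ys_def)
    ultimately show ?thesis
      using vec.subspace_dim_equal[OF B_subspace[OF W(1)] Y_subspace] by blast
  qed
  show thesis
    using that[OF Y_cases Y_subspace Y_dim Y_c] Y_below by blast
qed

lemma transversal_flag_step:
  assumes K: "Suc K \<le> CARD('n)" and E: "vec.subspace E" "vec.dim E = K"
    and E_c: "E \<inter> c (CARD('n) - Suc K) = {0}"
    and E_below: "\<forall>W\<in>B. vec.dim W \<le> K \<longrightarrow> W \<subseteq> E"
    and E_above: "\<forall>W\<in>B. K \<le> vec.dim W \<longrightarrow> E \<subseteq> W"
  shows "\<exists>D. vec.subspace D \<and> vec.dim D = Suc K \<and> E \<subseteq> D \<and> D \<inter> c (CARD('n) - Suc K) = {0}
    \<and> (\<forall>W\<in>B. vec.dim W \<le> Suc K \<longrightarrow> W \<subseteq> D) \<and> (\<forall>W\<in>B. Suc K \<le> vec.dim W \<longrightarrow> D \<subseteq> W)"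
proof -
  have B_subspace: "vec.subspace W" if "W \<in> B" for W
    using B_simplex that by (auto simp: is_simplex_def is_elem_iff)
  obtain Y where Y_cases: "Y = UNIV \<or> Y \<in> B" and Y: "vec.subspace Y" "Suc K \<le> vec.dim Y"
    "Y \<inter> c (CARD('n) - vec.dim Y) = {0}"
    and Y_below: "\<forall>W\<in>B. Suc K \<le> vec.dim W \<longrightarrow> Y \<subseteq> W \<and> vec.dim Y \<le> vec.dim W"
    by (rule exists_least_transversal_above[OF K])
  have "E \<subseteq> Y"
    using Y_cases Y(2) E_above by auto
  show ?thesis
  proof (cases "vec.dim Y = Suc K")
    case True
    have "W \<subseteq> Y" if W: "W \<in> B" "vec.dim W \<le> Suc K" for W
    proof (cases "vec.dim W \<le> K")
      case True
      then show ?thesis using W E_below \<open>E \<subseteq> Y\<close> by blast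
    next
      case False
      then have "Y \<subseteq> W" "vec.dim W \<le> vec.dim Y"
        using W Y_below \<open>vec.dim Y = Suc K\<close> by simp_all
      then show ?thesis
        using vec.subspace_dim_equal[OF Y(1) B_subspace[OF W(1)]] by simp
    qed
    with True Y Y_below \<open>E \<subseteq> Y\<close> show ?thesis
      by (intro exI[of _ Y]) auto
  next
    case False
    let ?C = "c (CARD('n) - Suc K)" and ?C' = "c (CARD('n) - vec.dim Y)"
    have "vec.dim Y \<le> CARD('n)"
      by (rule dim_subset_UNIV_cart_gen)
    then have "vec.dim ?C \<le> vec.dim ?C' + (vec.dim Y - Suc K)"
      using c_dim_step[of "CARD('n) - vec.dim Y" "CARD('n) - Suc K"] Y(2) K by simp
    then have dims: "vec.dim ?C + vec.dim E < vec.dim ?C' + vec.dim Y"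
      using E(2) Y(2) by linarith
    have "vec.subspace ?C" "vec.subspace ?C'" "?C' \<subseteq> ?C"
      using c_subspace c_mono K Y(2) by simp_all
    then obtain D where D: "vec.subspace D" "vec.dim D = Suc K" "E \<subseteq> D" "D \<subseteq> Y"
      "D \<inter> ?C = {0}"
      using exists_subspace_avoiding[OF E(1) _ _ Y(1) E_c \<open>E \<subseteq> Y\<close> _ Y(3) dims] E(2) by auto
    have "W \<subseteq> D" if W: "W \<in> B" "vec.dim W \<le> Suc K" for W
    proof -
      have "vec.dim W \<le> K"
      proof (rule ccontr)
        assume "\<not> vec.dim W \<le> K"
        then have "vec.dim Y \<le> vec.dim W"
          using Y_below W(1) by simp
        with W(2) False Y(2) show False
          by linarith
      qed
      then show ?thesis
        using W(1) E_below D(3) by blast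
    qed
    moreover have "D \<subseteq> W" if "W \<in> B" "Suc K \<le> vec.dim W" for W
      using Y_below that D(4) by blast
    ultimately show ?thesis
      using D by (intro exI[of _ D]) blast
  qed
qed

definition transversal_flag_upto :: "nat \<Rightarrow> (nat \<Rightarrow> (bit^'n) set) \<Rightarrow> bool" where
  "transversal_flag_upto K d \<longleftrightarrow>
    (\<forall>k\<le>K. vec.subspace (d k) \<and> vec.dim (d k) = k \<and> (0 < k \<longrightarrow> d k \<inter> c (CARD('n) - k) = {0})
      \<and> (\<forall>W\<in>B. vec.dim W \<le> k \<longrightarrow> W \<subseteq> d k) \<and> (\<forall>W\<in>B. k \<le> vec.dim W \<longrightarrow> d k \<subseteq> W))
    \<and> (\<forall>j k. j \<le> k \<longrightarrow> k \<le> K \<longrightarrow> d j \<subseteq> d k)"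

lemma exists_transversal_flag_upto: "K \<le> CARD('n) \<Longrightarrow> \<exists>d. transversal_flag_upto K d"
proof (induction K)
  case 0
  have "transversal_flag_upto 0 (\<lambda>_. {0})"
    using B_simplex by (auto simp: transversal_flag_upto_def is_simplex_def is_elem_iff vec.subspace_0)
  then show ?case by blast
next
  case (Suc K)
  then obtain d where d: "transversal_flag_upto K d" by auto
  have "d K \<inter> c (CARD('n) - Suc K) = {0}"
  proof (cases "K = 0")
    case True
    then show ?thesis
      using d Suc.prems c_subspace[of "CARD('n) - Suc K"]
      by (auto simp: transversal_flag_upto_def vec.subspace_0)
  next
    case False
    then have "d K \<inter> c (CARD('n) - K) = {0}" "vec.subspace (d K)"
      using d by (simp_all add: transversal_flag_upto_def)
    moreover have "c (CARD('n) - Suc K) \<subseteq> c (CARD('n) - K)"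
      using c_mono False Suc.prems by simp
    ultimately show ?thesis
      using c_subspace[of "CARD('n) - Suc K"] Suc.prems vec.subspace_0 by auto
  qed
  then obtain D where D: "vec.subspace D \<and> vec.dim D = Suc K \<and> d K \<subseteq> D
    \<and> D \<inter> c (CARD('n) - Suc K) = {0}
    \<and> (\<forall>W\<in>B. vec.dim W \<le> Suc K \<longrightarrow> W \<subseteq> D) \<and> (\<forall>W\<in>B. Suc K \<le> vec.dim W \<longrightarrow> D \<subseteq> W)"
    using transversal_flag_step[of K "d K"] d Suc.prems by (auto simp: transversal_flag_upto_def)
  have "d j \<subseteq> D" if "j \<le> K" for j
  proof -
    have "d j \<subseteq> d K" using d that by (simp add: transversal_flag_upto_def)
    with D show ?thesis by blast
  qed
  with d D have "transversal_flag_upto (Suc K) (d(Suc K := D))"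
    unfolding transversal_flag_upto_def by (auto simp: le_Suc_eq)
  then show ?case by blast
qed

lemma exists_transversal_chamber:
  "\<exists>D. is_chamber D \<and> B \<subseteq> D \<and> (\<forall>W\<in>D. W \<inter> c (CARD('n) - vec.dim W) = {0})"
proof -
  have B_elem: "is_elem W" if "W \<in> B" for W
    using B_simplex that by (simp add: is_simplex_def)
  obtain d where d: "transversal_flag_upto CARD('n) d"
    using exists_transversal_flag_upto by blast
  have "is_chamber (d ` {1..<CARD('n)})"
    using d by (intro is_chamber_flag) (auto simp: transversal_flag_upto_def)
  moreover have "B \<subseteq> d ` {1..<CARD('n)}"
  proof
    fix W assume W: "W \<in> B"
    then have "vec.dim W \<in> {1..<CARD('n)}"
      using B_elem[OF W] by (simp add: is_elem_iff)
    moreover have "d (vec.dim W) = W"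
      using d W calculation unfolding transversal_flag_upto_def
      by (auto dest!: spec[of _ "vec.dim W"])
    ultimately show "W \<in> d ` {1..<CARD('n)}" by force
  qed
  moreover have "\<forall>W\<in>d ` {1..<CARD('n)}. W \<inter> c (CARD('n) - vec.dim W) = {0}"
    using d by (auto simp: transversal_flag_upto_def)
  ultimately show ?thesis by blast
qed

end

lemma simplex_subset_chamber:
  fixes A :: "(bit^'n::finite) set set"
  assumes "is_simplex A"
  obtains C where "is_chamber C" "A \<subseteq> C"
  using exists_transversal_chamber[of "\<lambda>_. {0}" A] assms
  by (auto simp: is_simplex_def is_elem_iff vec.subspace_0)

definition chamber_chain :: "(bit^'n::finite) set set \<Rightarrow> nat \<Rightarrow> (bit^'n) set" where
  "chamber_chain C k = (if k = 0 then {0} else THE U. U \<in> C \<and> vec.dim U = k)"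

context
  fixes C :: "(bit^'n::finite) set set"
  assumes C: "is_chamber C"
begin

lemma chamber_chain_mem:
  assumes "1 \<le> k" "k < CARD('n)"
  shows "chamber_chain C k \<in> C" "vec.dim (chamber_chain C k) = k"
proof -
  obtain U where U: "U \<in> C" "vec.dim U = k"
    using chamber_has_elem_of_dim[OF C assms] by blast
  have "chamber_chain C k = U"
    unfolding chamber_chain_def using assms U simplex_elem_eqI[of C] C
    by (auto simp: is_chamber_def intro!: the_equality)
  then show "chamber_chain C k \<in> C" "vec.dim (chamber_chain C k) = k"
    using U by simp_all
qed

lemma chamber_chain_dim: "U \<in> C \<Longrightarrow> chamber_chain C (vec.dim U) = U"
  using chamber_elem[OF C] chamber_chain_mem simplex_elem_eqI[of C] C
  by (force simp: is_chamber_def is_elem_iff)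

lemma subspace_chamber_chain: "k < CARD('n) \<Longrightarrow> vec.subspace (chamber_chain C k)"
  using chamber_chain_mem chamber_elem[OF C]
  by (cases "k = 0") (auto simp: chamber_chain_def is_elem_iff)

lemma chamber_chain_mono:
  assumes "j \<le> k" "k < CARD('n)"
  shows "chamber_chain C j \<subseteq> chamber_chain C k"
proof (cases "j = 0")
  case True
  then show ?thesis
    using subspace_chamber_chain[OF assms(2)] by (simp add: chamber_chain_def vec.subspace_0)
next
  case False
  then have "chamber_chain C j \<subseteq> chamber_chain C k \<or> chamber_chain C k \<subseteq> chamber_chain C j"
    using C chamber_chain_mem(1)[of j] chamber_chain_mem(1)[of k] assms
    by (auto simp: is_chamber_def is_simplex_def)
  then show ?thesis
    using vec.dim_subset[of "chamber_chain C k" "chamber_chain C j"]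
      chamber_chain_mem(2)[of j] chamber_chain_mem(2)[of k] False assms by force
qed

lemma exists_opposite_chamber:
  assumes B: "is_simplex B"
    and transversal: "\<And>U W. U \<in> C \<Longrightarrow> W \<in> B \<Longrightarrow> vec.dim U + vec.dim W = CARD('n) \<Longrightarrow> U \<inter> W = {0}"
  shows "\<exists>D. is_chamber D \<and> B \<subseteq> D \<and> opp_chambers C D"
proof -
  let ?c = "chamber_chain C"
  have "\<exists>D. is_chamber D \<and> B \<subseteq> D \<and> (\<forall>W\<in>D. W \<inter> ?c (CARD('n) - vec.dim W) = {0})"
  proof (rule exists_transversal_chamber)
    show "vec.dim (?c k) \<le> vec.dim (?c j) + (k - j)" if "j \<le> k" "k < CARD('n)" for j k
      using that chamber_chain_mem(2) by (cases "j = 0") (auto simp: chamber_chain_def)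
    show "W \<inter> ?c (CARD('n) - vec.dim W) = {0}" if W: "W \<in> B" for W
    proof -
      have "1 \<le> vec.dim W" "vec.dim W < CARD('n)"
        using B W by (auto simp: is_simplex_def is_elem_iff)
      then show ?thesis
        using transversal[OF chamber_chain_mem(1) W] chamber_chain_mem(2) by (simp add: Int_commute)
    qed
    show "?c 0 = {0}"
      by (simp add: chamber_chain_def)
  qed (simp_all add: B subspace_chamber_chain chamber_chain_mono)
  then obtain D where D: "is_chamber D" "B \<subseteq> D"
    and D_c: "\<forall>W\<in>D. W \<inter> ?c (CARD('n) - vec.dim W) = {0}"
    by blast
  have "opp_chambers C D"
    unfolding opp_chambers_def elem_type_def rk_def
  proof (intro conjI C D(1) ballI impI)
    fix U W assume UW: "U \<in> C" "W \<in> D" "vec.dim U + vec.dim W = CARD('n) - 1 + 1"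
    then have "vec.dim U = CARD('n) - vec.dim W"
      by simp
    then have "U = ?c (CARD('n) - vec.dim W)"
      using chamber_chain_dim[OF UW(1)] by simp
    then show "U \<inter> W = {0}"
      using D_c UW(2) by blast
  qed
  with D show ?thesis by blast
qed

end

section \<open>The form of a duality\<close>

definition inv_duality :: "((bit^'n::finite) set \<Rightarrow> (bit^'n) set) \<Rightarrow> (bit^'n) set \<Rightarrow> (bit^'n) set"
  where "inv_duality \<theta> = inv_into {U. is_elem U} \<theta>"

text \<open>Over GF(2) a duality is the polarity of a nondegenerate, not necessarily symmetric,
  bilinear form: \<open>polar_form \<theta> x y = 0\<close> iff \<open>y\<close> lies in the hyperplane \<open>\<theta> \<langle>x\<rangle>\<close>. Polars
  with respect to \<open>inv_duality \<theta>\<close>, whose form is the transpose, are the left polars.\<close>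

definition polar_form :: "((bit^'n::finite) set \<Rightarrow> (bit^'n) set) \<Rightarrow> bit^'n \<Rightarrow> bit^'n \<Rightarrow> bit"
  where "polar_form \<theta> x y = (if x = 0 \<or> y \<in> \<theta> (vec.span {x}) then 0 else 1)"

definition polar :: "((bit^'n::finite) set \<Rightarrow> (bit^'n) set) \<Rightarrow> (bit^'n) set \<Rightarrow> (bit^'n) set"
  where "polar \<theta> S = {y. \<forall>x\<in>S. polar_form \<theta> x y = 0}"

locale duality =
  fixes \<theta> :: "(bit^'n::finite) set \<Rightarrow> (bit^'n) set"
  assumes card_ge_2: "2 \<le> CARD('n)" and is_duality: "is_duality \<theta>"
begin

lemma elem_image: "is_elem U \<Longrightarrow> is_elem (\<theta> U)"
  using is_duality by (auto simp: is_duality_def dest: bij_betw_apply)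

lemma dim_image: "is_elem U \<Longrightarrow> vec.dim (\<theta> U) = CARD('n) - vec.dim U"
  using is_duality card_ge_2 by (simp add: is_duality_def elem_type_def rk_def)

lemma image_subset_iff:
  assumes U: "is_elem U" and W: "is_elem W"
  shows "\<theta> W \<subseteq> \<theta> U \<longleftrightarrow> U \<subseteq> W"
proof -
  have comparable: "(U \<subseteq> W \<or> W \<subseteq> U) \<longleftrightarrow> (\<theta> U \<subseteq> \<theta> W \<or> \<theta> W \<subseteq> \<theta> U)"
    if "is_elem U" "is_elem W" for U W
    using is_duality that by (simp add: is_duality_def)
  have antimono: "\<theta> W \<subseteq> \<theta> U" if "is_elem U" "is_elem W" "U \<subseteq> W" for U W
  proof (cases "\<theta> U \<subseteq> \<theta> W")
    case True
    have "vec.dim U < CARD('n)" "vec.dim W < CARD('n)"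
      using that(1,2) by (simp_all add: is_elem_iff)
    then have "vec.dim W \<le> vec.dim U"
      using vec.dim_subset[OF True] that(1,2) by (simp add: dim_image)
    then have "U = W"
      using vec.subspace_dim_equal that by (auto simp: is_elem_iff)
    then show ?thesis by simp
  qed (use comparable that in blast)
  have "inj_on \<theta> {U. is_elem U}"
    using is_duality by (simp add: is_duality_def bij_betw_def)
  then show ?thesis
    using antimono[OF U W] antimono[OF W U] comparable[OF U W] U W
    by (metis inj_on_contraD mem_Collect_eq subset_antisym)
qed

lemma point_is_elem: "x \<noteq> 0 \<Longrightarrow> is_elem (vec.span {x::bit^'n})"
  using card_ge_2 by (simp add: is_elem_iff)

lemma inv_duality:
  assumes "is_elem U"
  shows "is_elem (inv_duality \<theta> U)" "\<theta> (inv_duality \<theta> U) = U"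
  using assms is_duality bij_betw_apply[OF bij_betw_inv_into] bij_betw_inv_into_right
  by (fastforce simp: inv_duality_def is_duality_def)+

lemma duality_inv_duality: "duality (inv_duality \<theta>)"
proof
  let ?\<psi> = "inv_duality \<theta>"
  have "bij_betw ?\<psi> {U. is_elem U} {U. is_elem U}"
    using is_duality by (simp add: inv_duality_def is_duality_def bij_betw_inv_into)
  moreover have "(U \<subseteq> W \<or> W \<subseteq> U) \<longleftrightarrow> (?\<psi> U \<subseteq> ?\<psi> W \<or> ?\<psi> W \<subseteq> ?\<psi> U)"
    if "is_elem U" "is_elem W" for U W
    using image_subset_iff[of "?\<psi> U" "?\<psi> W"] image_subset_iff[of "?\<psi> W" "?\<psi> U"]
      inv_duality that by auto
  moreover have "elem_type (?\<psi> U) = rk TYPE('n) + 1 - elem_type U" if "is_elem U" for U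
    using dim_image[of "?\<psi> U"] inv_duality[OF that] card_ge_2
    by (simp add: elem_type_def rk_def is_elem_iff)
  ultimately show "is_duality ?\<psi>"
    by (simp add: is_duality_def)
qed (rule card_ge_2)

lemma polar_form_inv_duality: "polar_form (inv_duality \<theta>) y x = polar_form \<theta> x y"
proof (cases "x = 0 \<or> y = 0")
  case True
  have "0 \<in> \<theta> (vec.span {x})" if "x \<noteq> 0"
    using elem_image[OF point_is_elem[OF that]] by (simp add: is_elem_iff vec.subspace_0)
  moreover have "0 \<in> inv_duality \<theta> (vec.span {y})" if "y \<noteq> 0"
    using inv_duality(1)[OF point_is_elem[OF that]] by (simp add: is_elem_iff vec.subspace_0)
  ultimately show ?thesis
    using True by (auto simp: polar_form_def)
next
  case False
  let ?\<psi> = "inv_duality \<theta>"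
  have x: "is_elem (vec.span {x})" and y: "is_elem (vec.span {y})"
    using False point_is_elem by auto
  have "y \<in> \<theta> (vec.span {x}) \<longleftrightarrow> \<theta> (?\<psi> (vec.span {y})) \<subseteq> \<theta> (vec.span {x})"
    using elem_image[OF x] inv_duality(2)[OF y]
    by (simp add: span_singleton_subset_iff is_elem_iff)
  also have "\<dots> \<longleftrightarrow> x \<in> ?\<psi> (vec.span {y})"
    using inv_duality(1)[OF y] x
    by (simp add: image_subset_iff span_singleton_subset_iff is_elem_iff)
  finally show ?thesis
    using False by (simp add: polar_form_def)
qed

lemma dim_point_image: "x \<noteq> 0 \<Longrightarrow> vec.dim (\<theta> (vec.span {x})) + 1 = CARD('n)"
  using dim_image[OF point_is_elem] card_ge_2 by simp

lemma polar_form_add_right: "polar_form \<theta> x (y + z) = polar_form \<theta> x y + polar_form \<theta> x z"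
proof (cases "x = 0")
  case False
  have "vec.subspace (\<theta> (vec.span {x}))"
    using elem_image[OF point_is_elem[OF False]] by (simp add: is_elem_iff)
  then have "y + z \<in> \<theta> (vec.span {x}) \<longleftrightarrow> (y \<in> \<theta> (vec.span {x}) \<longleftrightarrow> z \<in> \<theta> (vec.span {x}))"
    using hyperplane_add_iff dim_point_image[OF False] by blast
  then show ?thesis
    by (simp add: polar_form_def)
qed (simp add: polar_form_def)

lemma polar_form_add_left: "polar_form \<theta> (x + w) y = polar_form \<theta> x y + polar_form \<theta> w y"
proof -
  interpret inv: duality "inv_duality \<theta>"
    by (rule duality_inv_duality)
  show ?thesis
    using inv.polar_form_add_right[of y x w] by (simp add: polar_form_inv_duality)
qed

lemma mem_polar_iff: "y \<in> polar \<theta> S \<longleftrightarrow> y = 0 \<or> S \<subseteq> inv_duality \<theta> (vec.span {y})"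
  unfolding polar_def polar_form_inv_duality[symmetric] by (auto simp: polar_form_def)

lemma subspace_polar: "vec.subspace (polar \<theta> S)"
proof -
  have "0 \<in> polar \<theta> S"
    by (simp add: mem_polar_iff)
  then show ?thesis
    unfolding subspace_bit_iff by (simp add: polar_def polar_form_add_right)
qed

lemma polar_antimono: "S \<subseteq> T \<Longrightarrow> polar \<theta> T \<subseteq> polar \<theta> S"
  unfolding polar_def by blast

lemma polar_Un: "polar \<theta> (S \<union> T) = polar \<theta> S \<inter> polar \<theta> T"
  unfolding polar_def by blast

lemma polar_span: "polar \<theta> (vec.span S) = polar \<theta> S"
proof -
  have "vec.span S \<subseteq> inv_duality \<theta> (vec.span {y}) \<longleftrightarrow> S \<subseteq> inv_duality \<theta> (vec.span {y})"
    if "y \<noteq> 0" for y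
  proof -
    have "vec.subspace (inv_duality \<theta> (vec.span {y}))"
      using inv_duality(1)[OF point_is_elem[OF that]] by (simp add: is_elem_iff)
    then show ?thesis
      using vec.span_minimal vec.span_superset[of S] by blast
  qed
  then show ?thesis
    unfolding set_eq_iff mem_polar_iff by metis
qed

lemma polar_elem: "is_elem U \<Longrightarrow> polar \<theta> U = \<theta> U"
proof (rule set_eqI)
  fix y assume U: "is_elem U"
  have "U \<subseteq> inv_duality \<theta> (vec.span {y}) \<longleftrightarrow> y \<in> \<theta> U" if "y \<noteq> 0"
  proof -
    have y: "is_elem (vec.span {y})"
      using point_is_elem[OF that] .
    have "U \<subseteq> inv_duality \<theta> (vec.span {y}) \<longleftrightarrow> vec.span {y} \<subseteq> \<theta> U"
      using image_subset_iff[OF U inv_duality(1)[OF y]] inv_duality(2)[OF y] by simp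
    also have "\<dots> \<longleftrightarrow> y \<in> \<theta> U"
      using elem_image[OF U] by (simp add: span_singleton_subset_iff is_elem_iff)
    finally show ?thesis .
  qed
  moreover have "0 \<in> \<theta> U"
    using elem_image[OF U] by (simp add: is_elem_iff vec.subspace_0)
  ultimately show "y \<in> polar \<theta> U \<longleftrightarrow> y \<in> \<theta> U"
    by (auto simp: mem_polar_iff)
qed

lemma polar_zero: "polar \<theta> {0} = UNIV"
  by (simp add: polar_def polar_form_def)

lemma polar_UNIV: "polar \<theta> UNIV = {0}"
proof -
  have "inv_duality \<theta> (vec.span {y}) \<noteq> UNIV" if "y \<noteq> 0" for y
  proof
    assume "inv_duality \<theta> (vec.span {y}) = UNIV"
    then have "vec.dim (inv_duality \<theta> (vec.span {y})) = CARD('n)"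
      by (simp add: vec_dim_card del: vec.dim_UNIV)
    with inv_duality(1)[OF point_is_elem[OF that]] show False
      by (simp add: is_elem_iff)
  qed
  then show ?thesis
    unfolding set_eq_iff mem_polar_iff top.extremum_unique by auto
qed

lemma dim_polar:
  assumes S: "vec.subspace S"
  shows "vec.dim (polar \<theta> S) = CARD('n) - vec.dim S"
proof -
  consider "vec.dim S = 0" | "vec.dim S = CARD('n)" | "is_elem S"
    using S dim_subset_UNIV_cart_gen[of S] unfolding is_elem_iff by linarith
  then show ?thesis
  proof cases
    case 1
    then have "S = {0}"
      using S vec.subspace_0 by auto
    then show ?thesis
      by (simp add: polar_zero vec_dim_card del: vec.dim_UNIV)
  next
    case 2
    then have "S = UNIV"
      using subspace_eq_UNIV_iff_dim[OF S] by simp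
    with 2 show ?thesis
      by (simp add: polar_UNIV)
  qed (simp add: polar_elem dim_image)
qed

lemma polar_eq_0_imp_UNIV:
  assumes "vec.subspace S" "polar \<theta> S = {0}"
  shows "S = UNIV"
  using dim_polar[OF assms(1)] assms dim_subset_UNIV_cart_gen[of S]
    subspace_eq_UNIV_iff_dim[OF assms(1)] by simp

lemma polar_inv_duality_polar:
  assumes S: "vec.subspace S"
  shows "polar (inv_duality \<theta>) (polar \<theta> S) = S"
proof -
  interpret inv: duality "inv_duality \<theta>"
    by (rule duality_inv_duality)
  have "S \<subseteq> polar (inv_duality \<theta>) (polar \<theta> S)"
    by (auto simp: polar_def polar_form_inv_duality)
  moreover have "vec.dim (polar (inv_duality \<theta>) (polar \<theta> S)) = vec.dim S"
    using inv.dim_polar[OF subspace_polar] dim_polar[OF S] dim_subset_UNIV_cart_gen[of S] by simp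
  ultimately show ?thesis
    using vec.subspace_dim_equal[OF S inv.subspace_polar] by (metis order_refl)
qed

end

section \<open>Nondegenerate subspaces\<close>

definition nondegenerate :: "((bit^'n::finite) set \<Rightarrow> (bit^'n) set) \<Rightarrow> (bit^'n) set \<Rightarrow> bool"
  where "nondegenerate \<theta> W \<longleftrightarrow> vec.subspace W \<and> W \<inter> polar \<theta> W = {0}"

context duality
begin

lemma nondegenerate_Int_polar_inv_duality:
  assumes "nondegenerate \<theta> W"
  shows "W \<inter> polar (inv_duality \<theta>) W = {0}"
proof -
  interpret inv: duality "inv_duality \<theta>"
    by (rule duality_inv_duality)
  have W: "vec.subspace W" "W \<inter> polar \<theta> W = {0}"
    using assms by (simp_all add: nondegenerate_def)
  then have "vec.dim (vec.span (W \<union> polar \<theta> W)) = CARD('n)"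
    using dim_Un_Int[OF W(1) subspace_polar[of W]] dim_polar[OF W(1)]
      dim_subset_UNIV_cart_gen[of W] by simp
  then have "vec.span (W \<union> polar \<theta> W) = UNIV"
    using subspace_eq_UNIV_iff_dim[OF vec.subspace_span] by blast
  moreover have "polar (inv_duality \<theta>) (vec.span (W \<union> polar \<theta> W)) = polar (inv_duality \<theta>) W \<inter> W"
    by (simp add: inv.polar_span inv.polar_Un polar_inv_duality_polar[OF W(1)])
  ultimately have "{0} = polar (inv_duality \<theta>) W \<inter> W"
    by (simp add: inv.polar_UNIV)
  then show ?thesis by blast
qed

lemma dim_Int_polar:
  assumes W: "nondegenerate \<theta> W" and Y: "vec.subspace Y" "Y \<subseteq> W"
  shows "vec.dim (W \<inter> polar \<theta> Y) + vec.dim Y = vec.dim W"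
proof -
  interpret inv: duality "inv_duality \<theta>"
    by (rule duality_inv_duality)
  have "polar (inv_duality \<theta>) (vec.span (W \<union> polar \<theta> Y)) = polar (inv_duality \<theta>) W \<inter> Y"
    by (simp add: inv.polar_span inv.polar_Un polar_inv_duality_polar[OF Y(1)])
  also have "\<dots> = {0}"
    using nondegenerate_Int_polar_inv_duality[OF W] Y vec.subspace_0 by blast
  finally have "vec.span (W \<union> polar \<theta> Y) = UNIV"
    by (rule inv.polar_eq_0_imp_UNIV[OF vec.subspace_span])
  then have "vec.dim (W \<union> polar \<theta> Y) = CARD('n)"
    by (metis vec.dim_span vec_dim_card)
  then show ?thesis
    using W dim_Un_Int[of W "polar \<theta> Y"] dim_polar[OF Y(1)]
      dim_subset_UNIV_cart_gen[of Y] subspace_polar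
    by (simp add: nondegenerate_def)
qed

lemma nondegenerate_Int_polar:
  assumes W: "nondegenerate \<theta> W" and Y: "nondegenerate \<theta> Y" "Y \<subseteq> W"
  shows "nondegenerate \<theta> (W \<inter> polar \<theta> Y)"
proof -
  let ?Z = "W \<inter> polar \<theta> Y"
  have subspaces: "vec.subspace W" "vec.subspace Y" "vec.subspace ?Z"
    using W Y subspace_polar by (auto simp: nondegenerate_def intro: vec.subspace_inter)
  have "Y \<inter> ?Z = {0}"
    using Y vec.subspace_0[OF subspaces(3)] by (auto simp: nondegenerate_def)
  then have "vec.dim (vec.span (Y \<union> ?Z)) = vec.dim W"
    using dim_Un_Int[OF subspaces(2,3)] dim_Int_polar[OF W subspaces(2) Y(2)] by simp
  moreover have "vec.span (Y \<union> ?Z) \<subseteq> W"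
    using Y(2) subspaces(1) by (intro vec.span_minimal) auto
  ultimately have "vec.span (Y \<union> ?Z) = W"
    using vec.subspace_dim_equal[OF vec.subspace_span subspaces(1)] by simp
  then have "polar \<theta> Y \<inter> polar \<theta> ?Z = polar \<theta> W"
    by (metis polar_Un polar_span)
  then have "?Z \<inter> polar \<theta> ?Z \<subseteq> W \<inter> polar \<theta> W"
    by blast
  then show ?thesis
    using W subspaces(3) vec.subspace_0[OF subspaces(3)] vec.subspace_0[OF subspace_polar]
    by (auto simp: nondegenerate_def)
qed

lemma nondegenerate_span_Un:
  assumes U: "nondegenerate \<theta> U" and X: "nondegenerate \<theta> X" "X \<subseteq> polar \<theta> U"
  shows "nondegenerate \<theta> (vec.span (U \<union> X))"
proof -
  have subspaces: "vec.subspace U" "vec.subspace X"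
    using U X by (simp_all add: nondegenerate_def)
  have "z = 0" if z: "z \<in> vec.span (U \<union> X)" "z \<in> polar \<theta> (vec.span (U \<union> X))" for z
  proof -
    have z_polar: "z \<in> polar \<theta> U" "z \<in> polar \<theta> X"
      using z(2) by (simp_all add: polar_span polar_Un)
    have span_UX: "vec.span U = U" "vec.span X = X"
      using subspaces by simp_all
    obtain u x where ux: "z = u + x" "u \<in> U" "x \<in> X"
      using z(1) by (auto simp: vec.span_Un span_UX)
    have "polar_form \<theta> u' u = 0" if "u' \<in> U" for u'
    proof -
      have "polar_form \<theta> u' z = 0" "polar_form \<theta> u' x = 0"
        using z_polar(1) X(2) ux(3) that by (auto simp: polar_def)
      then show ?thesis
        using ux(1) by (simp add: polar_form_add_right)
    qed
    then have "u = 0"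
      using U ux(2) by (auto simp: nondegenerate_def polar_def)
    then show "z = 0"
      using X(1) ux z_polar(2) by (auto simp: nondegenerate_def)
  qed
  then show ?thesis
    using subspace_polar[of "vec.span (U \<union> X)"]
    by (auto simp: nondegenerate_def vec.span_zero vec.subspace_0)
qed

lemma dim_Un_polar:
  assumes U: "nondegenerate \<theta> U" and X: "vec.subspace X" "X \<subseteq> polar \<theta> U"
  shows "vec.dim (U \<union> X) = vec.dim U + vec.dim X"
proof -
  have "U \<inter> X = {0}"
    using U X vec.subspace_0[OF X(1)] by (auto simp: nondegenerate_def)
  then show ?thesis
    using dim_Un_Int[OF _ X(1), of U] U by (simp add: nondegenerate_def)
qed

lemma nondegenerate_span_anisotropic:
  assumes "polar_form \<theta> a a = 1"
  shows "nondegenerate \<theta> (vec.span {a})"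
proof -
  have "a \<notin> polar \<theta> {a}"
    using assms by (simp add: polar_def)
  then have "vec.span {a} \<inter> polar \<theta> (vec.span {a}) = {0}"
    using vec.subspace_0[OF subspace_polar] polar_span[of "{a}"]
    unfolding span_singleton_bit by auto
  then show ?thesis
    by (simp add: nondegenerate_def)
qed

lemma dim_span_anisotropic: "polar_form \<theta> a a = 1 \<Longrightarrow> vec.dim (vec.span {a}) = 1"
  by (auto simp: polar_form_def)

lemma nondegenerate_Int_polar_anisotropic:
  assumes W: "nondegenerate \<theta> W" and a: "a \<in> W" "polar_form \<theta> a a = 1"
  shows "nondegenerate \<theta> (W \<inter> polar \<theta> {a})" "vec.dim (W \<inter> polar \<theta> {a}) + 1 = vec.dim W"
proof -
  have P: "nondegenerate \<theta> (vec.span {a})" "vec.span {a} \<subseteq> W" "vec.dim (vec.span {a}) = 1"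
    using nondegenerate_span_anisotropic[OF a(2)] dim_span_anisotropic[OF a(2)] W a(1)
    by (auto simp: nondegenerate_def span_singleton_subset_iff)
  show "nondegenerate \<theta> (W \<inter> polar \<theta> {a})"
    using nondegenerate_Int_polar[OF W P(1,2)] by (simp add: polar_span)
  show "vec.dim (W \<inter> polar \<theta> {a}) + 1 = vec.dim W"
    using dim_Int_polar[OF W _ P(2)] P(1,3) by (simp add: polar_span nondegenerate_def)
qed

lemma exists_polar_form_eq_1:
  assumes W: "nondegenerate \<theta> W" and K: "vec.subspace K" "K \<subseteq> W"
    and dim: "vec.dim W < 2 * vec.dim K"
  shows "\<exists>w\<in>K. \<exists>u\<in>K. polar_form \<theta> w u = 1"
proof (rule ccontr)
  assume "\<not> (\<exists>w\<in>K. \<exists>u\<in>K. polar_form \<theta> w u = 1)"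
  then have "K \<subseteq> W \<inter> polar \<theta> K"
    using K(2) by (auto simp: polar_def)
  then have "vec.dim K \<le> vec.dim (W \<inter> polar \<theta> K)"
    by (rule vec.dim_subset)
  moreover have "vec.dim (W \<inter> polar \<theta> K) + vec.dim K = vec.dim W"
    by (rule dim_Int_polar[OF W K])
  ultimately show False
    using dim by linarith
qed

text \<open>Write \<open>\<beta> = polar_form \<theta>\<close>. If \<open>W \<inter> a\<^sup>\<perp>\<close> has no anisotropic vector, a dimension count
  gives \<open>w, u \<in> W \<inter> a\<^sup>\<perp> \<inter> \<^sup>\<perp>a\<close> with \<open>\<beta>(w, u) = 1\<close>; as \<open>w\<close> and \<open>u\<close> are isotropic,
  \<open>a + w\<close> and \<open>a + u\<close> are anisotropic and orthogonal.\<close>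

lemma exists_anisotropic_pair:
  assumes W: "nondegenerate \<theta> W" "4 \<le> vec.dim W" and a: "a \<in> W" "polar_form \<theta> a a = 1"
  obtains a' x where "a' \<in> W" "polar_form \<theta> a' a' = 1" "x \<in> W \<inter> polar \<theta> {a'}"
    "polar_form \<theta> x x = 1"
proof (cases "\<exists>x\<in>W \<inter> polar \<theta> {a}. polar_form \<theta> x x = 1")
  case True
  then show ?thesis
    using that a by blast
next
  case False
  interpret inv: duality "inv_duality \<theta>"
    by (rule duality_inv_duality)
  define Wa where "Wa = W \<inter> polar \<theta> {a}"
  define K where "K = Wa \<inter> polar (inv_duality \<theta>) {a}"
  have Wa: "nondegenerate \<theta> Wa" "vec.dim Wa + 1 = vec.dim W"
    using nondegenerate_Int_polar_anisotropic[OF W(1) a] by (simp_all add: Wa_def)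
  then have Wa_subspace: "vec.subspace Wa"
    by (simp add: nondegenerate_def)
  have K: "vec.subspace K" "K \<subseteq> Wa"
    using Wa_subspace inv.subspace_polar by (auto simp: K_def intro: vec.subspace_inter)
  have "vec.dim (polar (inv_duality \<theta>) {a}) + 1 = CARD('n)"
    using inv.dim_polar[of "vec.span {a}"] inv.polar_span dim_span_anisotropic[OF a(2)] card_ge_2
    by simp
  moreover have "vec.dim (Wa \<union> polar (inv_duality \<theta>) {a}) \<le> CARD('n)"
    by (rule dim_subset_UNIV_cart_gen)
  ultimately have dim_K: "vec.dim W \<le> vec.dim K + 2"
    using dim_Un_Int[OF Wa_subspace inv.subspace_polar[of "{a}"]] Wa(2)
    by (simp add: K_def)
  obtain w u where wu: "w \<in> K" "u \<in> K" "polar_form \<theta> w u = 1"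
    using exists_polar_form_eq_1[OF Wa(1) K] dim_K Wa(2) W(2) by force
  have w: "w \<in> W" "polar_form \<theta> a w = 0" "polar_form \<theta> w a = 0" "polar_form \<theta> w w = 0"
    and u: "u \<in> W" "polar_form \<theta> a u = 0" "polar_form \<theta> u a = 0" "polar_form \<theta> u u = 0"
    using wu(1,2) False by (auto simp: K_def Wa_def polar_def polar_form_inv_duality)
  show ?thesis
  proof (rule that[of "a + w" "a + u"])
    have "a + w \<in> W" "a + u \<in> W"
      using W(1) a(1) w(1) u(1) by (simp_all add: nondegenerate_def vec.subspace_add)
    then show "a + w \<in> W" by simp
    show "polar_form \<theta> (a + w) (a + w) = 1" "polar_form \<theta> (a + u) (a + u) = 1"
      using a(2) w u by (simp_all add: polar_form_add_left polar_form_add_right)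
    have "polar_form \<theta> (a + w) (a + u) = 0"
      using a(2) w u wu(3) by (simp add: polar_form_add_left polar_form_add_right)
    with \<open>a + u \<in> W\<close> show "a + u \<in> W \<inter> polar \<theta> {a + w}"
      by (simp add: polar_def)
  qed
qed

end

section \<open>Flags of nondegenerate subspaces and opposition\<close>

lemma insert_1_Suc_image_atLeastLessThan_Diff:
  assumes "2 \<le> j" "j < (m::nat)"
  shows "insert 1 (Suc ` ({1..<m - 1} - {j - 1})) = {1..<m} - {j}"
proof -
  have "Suc ` ({1..<m - 1} - {j - 1}) = {Suc 1..<m} - {j}"
    using assms by (simp add: image_set_diff image_Suc_atLeastLessThan)
  then show ?thesis
    using assms by auto
qed

lemma diff_image_atLeastLessThan_Diff:
  "(\<lambda>k. m - k) ` ({1..<m} - {m - 1}) = {1..<(m::nat)} - {1}"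
proof
  show "{1..<m} - {1} \<subseteq> (\<lambda>k. m - k) ` ({1..<m} - {m - 1})"
  proof
    fix k assume "k \<in> {1..<m} - {1}"
    then have "k = m - (m - k)" "m - k \<in> {1..<m} - {m - 1}"
      by auto
    then show "k \<in> (\<lambda>k. m - k) ` ({1..<m} - {m - 1})"
      by blast
  qed
qed auto

definition nondegenerate_flag ::
  "((bit^'n::finite) set \<Rightarrow> (bit^'n) set) \<Rightarrow> (bit^'n) set \<Rightarrow> (bit^'n) set set \<Rightarrow> nat set \<Rightarrow> bool"
  where "nondegenerate_flag \<theta> W F J \<longleftrightarrow>
    (\<forall>X\<in>F. X \<subseteq> W \<and> nondegenerate \<theta> X) \<and> (\<forall>X\<in>F. \<forall>Y\<in>F. X \<subseteq> Y \<or> Y \<subseteq> X) \<and> vec.dim ` F = J"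

context duality
begin

lemma nondegenerate_flag_cone:
  assumes W: "nondegenerate \<theta> W" and a: "a \<in> W" "polar_form \<theta> a a = 1"
    and F: "nondegenerate_flag \<theta> (W \<inter> polar \<theta> {a}) F J"
  shows "nondegenerate_flag \<theta> W
    (insert (vec.span {a}) ((\<lambda>X. vec.span (vec.span {a} \<union> X)) ` F)) (insert 1 (Suc ` J))"
proof -
  let ?P = "vec.span {a}"
  have P: "nondegenerate \<theta> ?P" "?P \<subseteq> W" "vec.dim ?P = 1"
    using nondegenerate_span_anisotropic[OF a(2)] dim_span_anisotropic[OF a(2)] W a(1)
    by (auto simp: nondegenerate_def span_singleton_subset_iff)
  have F_mem: "X \<subseteq> W" "X \<subseteq> polar \<theta> ?P" "nondegenerate \<theta> X" if "X \<in> F" for X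
    using F that by (auto simp: nondegenerate_flag_def polar_span)
  have cone: "vec.span (?P \<union> X) \<subseteq> W" "nondegenerate \<theta> (vec.span (?P \<union> X))"
    "vec.dim (vec.span (?P \<union> X)) = Suc (vec.dim X)" if "X \<in> F" for X
  proof -
    show "vec.span (?P \<union> X) \<subseteq> W"
      using W P(2) F_mem(1)[OF that] by (intro vec.span_minimal) (auto simp: nondegenerate_def)
    show "nondegenerate \<theta> (vec.span (?P \<union> X))"
      using nondegenerate_span_Un[OF P(1) F_mem(3,2)[OF that]] .
    show "vec.dim (vec.span (?P \<union> X)) = Suc (vec.dim X)"
      using dim_Un_polar[OF P(1) _ F_mem(2)[OF that]] F_mem(3)[OF that] P(3)
      by (simp add: nondegenerate_def)
  qed
  have "?P \<subseteq> vec.span (?P \<union> X)" for X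
    using vec.span_superset[of "?P \<union> X"] by blast
  moreover have "vec.span (?P \<union> X) \<subseteq> vec.span (?P \<union> Y) \<or> vec.span (?P \<union> Y) \<subseteq> vec.span (?P \<union> X)"
    if "X \<in> F" "Y \<in> F" for X Y
  proof -
    have "X \<subseteq> Y \<or> Y \<subseteq> X"
      using F that by (simp add: nondegenerate_flag_def)
    then show ?thesis
      by (meson Un_mono order_refl vec.span_mono)
  qed
  moreover have "vec.dim ` insert ?P ((\<lambda>X. vec.span (?P \<union> X)) ` F) = insert 1 (Suc ` J)"
  proof -
    have "(\<lambda>X. vec.dim (vec.span (?P \<union> X))) ` F = Suc ` vec.dim ` F"
      unfolding image_image using cone(3) by (rule image_cong[OF refl])
    moreover have "vec.dim ` F = J"
      using F by (simp add: nondegenerate_flag_def)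
    ultimately show ?thesis
      using P(3) by (simp add: image_image)
  qed
  ultimately show ?thesis
    using P cone unfolding nondegenerate_flag_def by blast
qed

lemma nondegenerate_flag_complement:
  assumes W: "nondegenerate \<theta> W" and F: "nondegenerate_flag \<theta> W F J"
  shows "nondegenerate_flag \<theta> W ((\<lambda>X. W \<inter> polar \<theta> X) ` F) ((\<lambda>k. vec.dim W - k) ` J)"
proof -
  have X: "nondegenerate \<theta> (W \<inter> polar \<theta> X)" "vec.dim (W \<inter> polar \<theta> X) = vec.dim W - vec.dim X"
    if "X \<in> F" for X
  proof -
    have "X \<subseteq> W" "nondegenerate \<theta> X"
      using F that by (auto simp: nondegenerate_flag_def)
    then show "nondegenerate \<theta> (W \<inter> polar \<theta> X)"
      using nondegenerate_Int_polar[OF W] by blast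
    have "vec.dim (W \<inter> polar \<theta> X) + vec.dim X = vec.dim W"
      using dim_Int_polar[OF W _ \<open>X \<subseteq> W\<close>] \<open>nondegenerate \<theta> X\<close> by (simp add: nondegenerate_def)
    then show "vec.dim (W \<inter> polar \<theta> X) = vec.dim W - vec.dim X"
      by simp
  qed
  have "vec.dim ` (\<lambda>X. W \<inter> polar \<theta> X) ` F = (\<lambda>k. vec.dim W - k) ` vec.dim ` F"
    unfolding image_image using X(2) by (rule image_cong[OF refl])
  then have "vec.dim ` (\<lambda>X. W \<inter> polar \<theta> X) ` F = (\<lambda>k. vec.dim W - k) ` J"
    using F by (simp add: nondegenerate_flag_def)
  moreover have "W \<inter> polar \<theta> X \<subseteq> W \<inter> polar \<theta> Y \<or> W \<inter> polar \<theta> Y \<subseteq> W \<inter> polar \<theta> X"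
    if "X \<in> F" "Y \<in> F" for X Y
  proof -
    have "X \<subseteq> Y \<or> Y \<subseteq> X"
      using F that by (simp add: nondegenerate_flag_def)
    then show ?thesis
      using polar_antimono by blast
  qed
  ultimately show ?thesis
    using X(1) by (auto simp: nondegenerate_flag_def)
qed

text \<open>To omit dimension \<open>i \<ge> 2\<close>, split off an anisotropic point and recurse in its polar; to
  omit dimension 1, take polars in \<open>W\<close> of a flag omitting dimension \<open>dim W - 1\<close>.\<close>

lemma nondegenerate_flag_omitting:
  assumes "nondegenerate \<theta> W" "a \<in> W" "polar_form \<theta> a a = 1" "1 \<le> i" "i < vec.dim W"
  shows "\<exists>F. nondegenerate_flag \<theta> W F ({1..<vec.dim W} - {i})"
  using assms
proof (induction "vec.dim W" arbitrary: W a i rule: less_induct)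
  case less
  note W = less.prems(1) and a = less.prems(2,3)
  let ?m = "vec.dim W"
  have omit_ge_2: "\<exists>F. nondegenerate_flag \<theta> W F ({1..<?m} - {j})" if j: "2 \<le> j" "j < ?m" for j
  proof (cases "?m = 3")
    case True
    have "nondegenerate_flag \<theta> W {vec.span {a}} {1}"
      using nondegenerate_span_anisotropic[OF a(2)] dim_span_anisotropic[OF a(2)] W a(1)
      by (auto simp: nondegenerate_flag_def nondegenerate_def span_singleton_subset_iff)
    moreover have "{1..<?m} - {j} = {1}"
      using True j by auto
    ultimately show ?thesis by auto
  next
    case False
    then have "4 \<le> ?m"
      using j by linarith
    obtain a' x where a': "a' \<in> W" "polar_form \<theta> a' a' = 1"
      and x: "x \<in> W \<inter> polar \<theta> {a'}" "polar_form \<theta> x x = 1"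
      by (rule exists_anisotropic_pair[OF W \<open>4 \<le> ?m\<close> a])
    let ?W' = "W \<inter> polar \<theta> {a'}"
    have W': "nondegenerate \<theta> ?W'" "vec.dim ?W' + 1 = ?m"
      using nondegenerate_Int_polar_anisotropic[OF W a'] by simp_all
    have "\<exists>F'. nondegenerate_flag \<theta> ?W' F' ({1..<vec.dim ?W'} - {j - 1})"
      using W' x j by (intro less.hyps) simp_all
    then obtain F' where "nondegenerate_flag \<theta> ?W' F' ({1..<?m - 1} - {j - 1})"
      using W'(2) by (metis add_diff_cancel_right')
    then have "\<exists>F. nondegenerate_flag \<theta> W F (insert 1 (Suc ` ({1..<?m - 1} - {j - 1})))"
      using nondegenerate_flag_cone[OF W a'] by blast
    then show ?thesis
      by (simp only: insert_1_Suc_image_atLeastLessThan_Diff[OF j])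
  qed
  show ?case
  proof (cases "i = 1")
    case False
    then show ?thesis
      using omit_ge_2 less.prems(4,5) by simp
  next
    case i: True
    show ?thesis
    proof (cases "?m = 2")
      case True
      then have "nondegenerate_flag \<theta> W {} ({1..<?m} - {i})"
        using i by (auto simp: nondegenerate_flag_def)
      then show ?thesis by blast
    next
      case False
      then have "2 \<le> ?m - 1"
        using less.prems(5) i by linarith
      then obtain F0 where "nondegenerate_flag \<theta> W F0 ({1..<?m} - {?m - 1})"
        using omit_ge_2[of "?m - 1"] by auto
      then have "\<exists>F. nondegenerate_flag \<theta> W F ((\<lambda>k. ?m - k) ` ({1..<?m} - {?m - 1}))"
        using nondegenerate_flag_complement[OF W] by blast
      then show ?thesis
        by (simp only: diff_image_atLeastLessThan_Diff i)
    qed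
  qed
qed

lemma opp_simplices_image:
  assumes A: "is_simplex A" and transversal: "\<And>U. U \<in> A \<Longrightarrow> U \<inter> \<theta> U = {0}"
  shows "opp_simplices A (\<theta> ` A)"
proof -
  have A_elem: "is_elem U" if "U \<in> A" for U
    using A that by (simp add: is_simplex_def)
  have "\<theta> U \<subseteq> \<theta> W \<or> \<theta> W \<subseteq> \<theta> U" if "U \<in> A" "W \<in> A" for U W
    using A that image_subset_iff[OF A_elem A_elem] by (auto simp: is_simplex_def)
  then have \<theta>A: "is_simplex (\<theta> ` A)"
    using A_elem elem_image by (auto simp: is_simplex_def)
  have "\<exists>D. is_chamber D \<and> \<theta> ` A \<subseteq> D \<and> opp_chambers C D" if C: "is_chamber C" "A \<subseteq> C" for C
  proof (rule exists_opposite_chamber[OF C(1) \<theta>A])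
    fix U W assume U: "U \<in> C" and "W \<in> \<theta> ` A" and dims: "vec.dim U + vec.dim W = CARD('n)"
    then obtain U' where U': "U' \<in> A" "W = \<theta> U'" by blast
    then have "vec.dim U = vec.dim U'"
      using dims dim_image[OF A_elem[OF U'(1)]] dim_subset_UNIV_cart_gen[of U'] by simp
    then have "U = U'"
      using simplex_elem_eqI[of C] C U U'(1) by (auto simp: is_chamber_def)
    then show "U \<inter> W = {0}"
      using transversal U' by simp
  qed
  moreover have "\<exists>C. is_chamber C \<and> A \<subseteq> C \<and> opp_chambers C D" if D: "is_chamber D" "\<theta> ` A \<subseteq> D" for D
  proof -
    have "\<exists>C. is_chamber C \<and> A \<subseteq> C \<and> opp_chambers D C"
    proof (rule exists_opposite_chamber[OF D(1) A])
      fix U W assume U: "U \<in> D" and W: "W \<in> A" and dims: "vec.dim U + vec.dim W = CARD('n)"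
      then have "vec.dim U = vec.dim (\<theta> W)"
        using dim_image[OF A_elem[OF W]] by simp
      then have "U = \<theta> W"
        using simplex_elem_eqI[of D] D U W by (auto simp: is_chamber_def)
      then show "U \<inter> W = {0}"
        using transversal W by blast
    qed
    then show ?thesis
      using opp_chambers_sym by blast
  qed
  ultimately show ?thesis
    using A \<theta>A by (simp add: opp_simplices_def)
qed

lemma Int_image_eq_0_if_opp_simplices:
  assumes opp: "opp_simplices A (\<theta> ` A)" and U: "U \<in> A"
  shows "U \<inter> \<theta> U = {0}"
proof -
  have A: "is_simplex A"
    using opp by (simp add: opp_simplices_def)
  obtain C where C: "is_chamber C" "A \<subseteq> C"
    by (rule simplex_subset_chamber[OF A])
  then obtain D where "\<theta> ` A \<subseteq> D" "opp_chambers C D"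
    using opp by (auto simp: opp_simplices_def)
  moreover have "elem_type U + elem_type (\<theta> U) = rk TYPE('n) + 1"
    using A U dim_image card_ge_2 by (auto simp: is_simplex_def is_elem_iff elem_type_def rk_def)
  ultimately show ?thesis
    using C(2) U unfolding opp_chambers_def by blast
qed

lemma anisotropic_if_opp_point:
  assumes opp: "opp_simplices A (\<theta> ` A)" and p: "p \<in> A" "vec.dim p = 1"
  obtains a where "polar_form \<theta> a a = 1"
proof -
  have p_subspace: "vec.subspace p"
    using opp p(1) by (auto simp: opp_simplices_def is_simplex_def is_elem_iff)
  have "\<not> p \<subseteq> {0}"
    using p(2) vec.dim_eq_0[of p] by simp
  then obtain a where a: "a \<in> p" "a \<noteq> 0"
    by blast
  then have "vec.span {a} = p"
    using p_subspace p(2) vec.subspace_dim_equal[OF vec.subspace_span p_subspace]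
    by (simp add: span_singleton_subset_iff)
  then have "a \<notin> \<theta> (vec.span {a})"
    using Int_image_eq_0_if_opp_simplices[OF opp p(1)] a by blast
  then show ?thesis
    using that a(2) by (simp add: polar_form_def)
qed

lemma not_J_domestic_if_anisotropic:
  assumes a: "polar_form \<theta> a a = 1" and J: "J \<subset> typeset TYPE('n)"
  shows "\<not> J_domestic J \<theta>"
proof -
  obtain i where i: "i \<in> typeset TYPE('n)" "i \<notin> J"
    using J by blast
  have "nondegenerate \<theta> UNIV"
    by (simp add: nondegenerate_def polar_UNIV)
  then obtain F where F: "nondegenerate_flag \<theta> UNIV F ({1..<CARD('n)} - {i})"
    using nondegenerate_flag_omitting[of UNIV a i] a i(1)
    by (auto simp: typeset_eq vec_dim_card simp del: vec.dim_UNIV)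
  define A where "A = {X \<in> F. vec.dim X \<in> J}"
  have J_dims: "J \<subseteq> vec.dim ` F"
    using F J i by (auto simp: nondegenerate_flag_def typeset_eq)
  have A_elem: "is_elem X" and A_transversal: "X \<inter> \<theta> X = {0}" if "X \<in> A" for X
  proof -
    have "X \<in> F"
      using that by (simp add: A_def)
    then have "vec.dim X \<in> {1..<CARD('n)} - {i}" "nondegenerate \<theta> X"
      using F unfolding nondegenerate_flag_def by blast+
    then show "is_elem X" "X \<inter> \<theta> X = {0}"
      using polar_elem by (auto simp: is_elem_iff nondegenerate_def)
  qed
  have A_simplex: "is_simplex A"
    using F A_elem by (auto simp: is_simplex_def A_def nondegenerate_flag_def)
  moreover have "simplex_type A = J"
    using J_dims by (auto simp: simplex_type_def elem_type_def A_def)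
  moreover have "opp_simplices A (\<theta> ` A)"
    using opp_simplices_image[OF A_simplex A_transversal] .
  ultimately show ?thesis
    by (auto simp: J_domestic_def)
qed

end

theorem theorem3p11:
  fixes \<theta> :: "(bit ^ 'n::finite) set \<Rightarrow> (bit ^ 'n) set"
  assumes "CARD('n) \<ge> 3"
    and "is_duality \<theta>"
    and "exceptional_domestic \<theta>"
  shows "strongly_exceptional_domestic \<theta>"
proof -
  interpret duality \<theta>
    using assms(1,2) by unfold_locales simp_all
  have "1 \<in> typeset TYPE('n)"
    using assms(1) by (simp add: typeset_eq)
  then obtain A where "opp_simplices A (\<theta> ` A)" "1 \<in> simplex_type A"
    using assms(3) by (auto simp: exceptional_domestic_def)
  then obtain a where "polar_form \<theta> a a = 1"
    by (auto simp: simplex_type_def elem_type_def elim: anisotropic_if_opp_point)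
  then show ?thesis
    using assms(3) not_J_domestic_if_anisotropic
    by (simp add: strongly_exceptional_domestic_def exceptional_domestic_def)
qed

end
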